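(* Let $n,m\ge1$, $a\in\mathbb{R}^n$ with $\|a\|=1$, $d\in\mathbb{R}^m$ with $\|d\|<1$, and $\lambda\in\mathbb{R}^n$ with $\|\lambda\|=1$ and $\lambda\neq\pm a$. Let $$C=\{(x,y)\in\mathbb{R}^{n+m} : -\lambda^\mathsf{T} x+\nabla\phi_\lambda(\beta)^\mathsf{T} y\le r(\beta)\ \text{ for all }\beta\in\mathbb{R}^m,\ \|\beta\|=1\}$$ and $S=\{(x,y)\in\mathbb{R}^{n+m}:\|x\|\le\|y\|,\ a^\mathsf{T} x+d^\mathsf{T} y=-1\}$. Then $C$ is $S$-free, i.e. $\operatorname{int}(C)\cap S=\emptyset$.
   Context: $\|\cdot\|$ is the Euclidean norm. For $y\in\mathbb{R}^m$, $\phi_\lambda(y)=\max\{\lambda^\mathsf{T} x : x\in\mathbb{R}^n,\ \|x\|\le\|y\|,\ a^\mathsf{T} x+d^\mathsf{T} y\le 0\}$; under the hypotheses this is a finite convex function differentiable on $\mathbb{R}^m\setminus\{0\}$, and $\nabla\phi_\lambda(\beta)$ denotes its gradient. For $\|\beta\|=1$, $r(\beta)=0$ if $\lambda^\mathsf{T} a+d^\mathsf{T}\beta\le0$, and otherwise $r(\beta)=\dfrac{d^\mathsf{T}\beta+\lambda^\mathsf{T} a\,\phi_\lambda(\beta)}{\phi_\lambda(\beta)+d^\mathsf{T}\beta\,\lambda^\mathsf{T} a}$. *)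

theory Defs
  imports "HOL-Analysis.Analysis"
begin

definition phi :: "real^'n \<Rightarrow> real^'n \<Rightarrow> real^'m \<Rightarrow> real^'m \<Rightarrow> real" where
  "phi lam a d y = Sup {lam \<bullet> x | x. norm x \<le> norm y \<and> a \<bullet> x + d \<bullet> y \<le> 0}"

definition grad_phi :: "real^'n \<Rightarrow> real^'n \<Rightarrow> real^'m \<Rightarrow> real^'m \<Rightarrow> real^'m" where
  "grad_phi lam a d beta = (THE g. GDERIV (phi lam a d) beta :> g)"

definition r_fun :: "real^'n \<Rightarrow> real^'n \<Rightarrow> real^'m \<Rightarrow> real^'m \<Rightarrow> real" where
  "r_fun lam a d beta =
     (if lam \<bullet> a + d \<bullet> beta \<le> 0 then 0
      else (d \<bullet> beta + (lam \<bullet> a) * phi lam a d beta) /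
           (phi lam a d beta + (d \<bullet> beta) * (lam \<bullet> a)))"

definition C_set :: "real^'n \<Rightarrow> real^'n \<Rightarrow> real^'m \<Rightarrow> ((real^'n) \<times> (real^'m)) set" where
  "C_set lam a d = {(x, y). \<forall>beta. norm beta = 1 \<longrightarrow>
       - (lam \<bullet> x) + grad_phi lam a d beta \<bullet> y \<le> r_fun lam a d beta}"

definition S_set :: "real^'n \<Rightarrow> real^'m \<Rightarrow> ((real^'n) \<times> (real^'m)) set" where
  "S_set a d = {(x, y). norm x \<le> norm y \<and> a \<bullet> x + d \<bullet> y = -1}"

end

theory Submission
  imports Defs
begin

text \<open>Write c = lam \<bullet> a and s = sqrt (1 - c^2). The maximisation defining phi_lam(y) lives
  in the plane of a and lam: if c |y| + d \<bullet> y \<le> 0, the point |y| lam is feasible and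
  phi_lam(y) = |y|; otherwise the halfspace constraint is active and
  phi_lam(y) = - c (d \<bullet> y) + s sqrt (|y|^2 - (d \<bullet> y)^2). Where the two regimes meet, these
  formulas agree to first order, so phi_lam is differentiable away from 0, and being positively
  homogeneous it satisfies Euler's identity grad phi_lam(beta) \<bullet> beta = phi_lam(beta).
  For (x, y) in S and beta = y / |y| the constraint of C indexed by beta therefore reads
  - lam \<bullet> x + |y| phi_lam(beta) \<le> r(beta), while an elementary estimate in |y|, d \<bullet> beta
  and a \<bullet> x = -1 - |y| (d \<bullet> beta) gives the reverse inequality. Interior points of C satisfy
  every constraint strictly (move x a little in the direction - lam), so none lies in S.\<close>

lemma has_derivative_sandwich:
  fixes f L U :: "'a::real_normed_vector \<Rightarrow> real"
  assumes between: "eventually (\<lambda>z. L z \<le> f z \<and> f z \<le> U z) (at x)"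
    and "L x = f x" and "U x = f x"
    and L: "(L has_derivative D) (at x)" and U: "(U has_derivative D) (at x)"
  shows "(f has_derivative D) (at x)"
proof -
  let ?q = "\<lambda>g y. ((g y - g x) - D (y - x)) /\<^sub>R norm (y - x)"
  have lim_L: "(?q L \<longlongrightarrow> 0) (at x)" and lim_U: "(?q U \<longlongrightarrow> 0) (at x)"
    using L U by (simp_all add: has_derivative_at_within)
  have "eventually (\<lambda>y. ?q L y \<le> ?q f y) (at x)"
    using between by eventually_elim (auto simp: assms(2) intro!: mult_left_mono)
  moreover have "eventually (\<lambda>y. ?q f y \<le> ?q U y) (at x)"
    using between by eventually_elim (auto simp: assms(3) intro!: mult_left_mono)
  ultimately have "(?q f \<longlongrightarrow> 0) (at x)"
    using lim_L lim_U by (rule tendsto_sandwich)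
  with has_derivative_bounded_linear[OF L] show ?thesis
    by (simp add: has_derivative_at_within)
qed

lemma gderiv_unique:
  fixes f :: "'a::real_inner \<Rightarrow> real"
  assumes "GDERIV f x :> g" and "GDERIV f x :> g'"
  shows "g = g'"
proof -
  have "(\<lambda>h. h \<bullet> g) = (\<lambda>h. h \<bullet> g')"
    using assms unfolding gderiv_def by (rule has_derivative_unique)
  then have "(g - g') \<bullet> (g - g') = 0"
    by (metis inner_diff_left inner_diff_right diff_self)
  then show ?thesis by simp
qed

lemma has_derivative_imp_gderiv:
  fixes f :: "'a::euclidean_space \<Rightarrow> real"
  assumes "(f has_derivative D) (at x)"
  shows "GDERIV f x :> adjoint D 1"
proof -
  have "D = (\<lambda>h. h \<bullet> adjoint D 1)"
    using adjoint_works[OF has_derivative_linear[OF assms]] by fastforce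
  then show ?thesis unfolding gderiv_def using assms by simp
qed

lemma gderiv_inner_self_if_homogeneous:
  fixes f :: "'a::real_inner \<Rightarrow> real"
  assumes g: "GDERIV f b :> g" and hom: "\<And>t. t > 0 \<Longrightarrow> f (t *\<^sub>R b) = t * f b"
  shows "g \<bullet> b = f b"
proof -
  have "((\<lambda>h::real. (1 + h) *\<^sub>R b) has_derivative (\<lambda>h. h *\<^sub>R b)) (at 0)"
    by (auto intro!: derivative_eq_intros)
  with g have chain: "((\<lambda>h::real. f ((1 + h) *\<^sub>R b)) has_derivative (\<lambda>h. (h *\<^sub>R b) \<bullet> g)) (at 0)"
    unfolding gderiv_def using has_derivative_compose[of "\<lambda>h. (1 + h) *\<^sub>R b"] by fastforce
  have "((\<lambda>h::real. (1 + h) * f b) has_derivative (\<lambda>h. h * f b)) (at 0)"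
    by (auto intro!: derivative_eq_intros)
  then have ray: "((\<lambda>h::real. f ((1 + h) *\<^sub>R b)) has_derivative (\<lambda>h. h * f b)) (at 0)"
    by (rule has_derivative_transform_within_open[where s = "{-1<..}"]) (auto simp: hom)
  have "(\<lambda>h::real. (h *\<^sub>R b) \<bullet> g) = (\<lambda>h. h * f b)"
    using has_derivative_unique[OF chain ray] .
  then show ?thesis by (metis inner_commute scaleR_one mult_1)
qed

lemma cross_le_on_upper_semicircle:
  fixes c s q r :: real
  assumes cs: "c\<^sup>2 + s\<^sup>2 = 1" and "s > 0" and "q \<le> c * r" and "\<bar>q\<bar> \<le> r"
  shows "s * q \<le> c * sqrt (r\<^sup>2 - q\<^sup>2)"
proof -
  define w where "w = sqrt (r\<^sup>2 - q\<^sup>2)"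
  have "r \<ge> 0" using \<open>\<bar>q\<bar> \<le> r\<close> by linarith
  then have "q\<^sup>2 \<le> r\<^sup>2" using \<open>\<bar>q\<bar> \<le> r\<close> by (simp add: power2_le_iff_abs_le)
  then have "w \<ge> 0" and w2: "w\<^sup>2 = r\<^sup>2 - q\<^sup>2" by (simp_all add: w_def)
  have s2: "s\<^sup>2 = 1 - c\<^sup>2" using cs by simp
  have sq: "(c * w)\<^sup>2 - (s * q)\<^sup>2 = (c * r)\<^sup>2 - q\<^sup>2"
    unfolding power_mult_distrib w2 s2 by (simp add: algebra_simps)
  consider "q \<ge> 0" "c \<ge> 0" | "q < 0" "c \<ge> 0" | "c < 0"
    by linarith
  then show ?thesis
  proof cases
    case 1
    then have "q\<^sup>2 \<le> (c * r)\<^sup>2" using \<open>q \<le> c * r\<close> by (simp add: power_mono)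
    with sq have "(s * q)\<^sup>2 \<le> (c * w)\<^sup>2" by linarith
    moreover have "c * w \<ge> 0" using 1 \<open>w \<ge> 0\<close> by simp
    ultimately show ?thesis unfolding w_def[symmetric] by (rule power2_le_imp_le)
  next
    case 2
    then have "s * q \<le> 0" and "0 \<le> c * w"
      using \<open>s > 0\<close> \<open>w \<ge> 0\<close> by (simp_all add: mult_pos_neg less_imp_le)
    then show ?thesis unfolding w_def[symmetric] by linarith
  next
    case 3
    then have "c * r \<le> 0" using \<open>r \<ge> 0\<close> by (simp add: mult_nonpos_nonneg)
    with \<open>q \<le> c * r\<close> have "(c * r)\<^sup>2 \<le> q\<^sup>2" by (simp add: abs_le_square_iff[symmetric])
    with sq have "(c * w)\<^sup>2 \<le> (s * q)\<^sup>2" by linarith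
    moreover have "s * q \<le> 0"
      using \<open>s > 0\<close> \<open>q \<le> c * r\<close> \<open>c * r \<le> 0\<close> by (simp add: mult_nonneg_nonpos)
    moreover have "c * w \<le> 0" using 3 \<open>w \<ge> 0\<close> by (simp add: mult_nonpos_nonneg)
    ultimately have "- (c * w) \<le> - (s * q)"
      using power2_le_imp_le[of "- (c * w)" "- (s * q)"] by simp
    then show ?thesis unfolding w_def[symmetric] by linarith
  qed
qed

lemma half_chord_le:
  fixes \<rho> \<delta> :: real
  assumes "\<rho> > 0" and "\<bar>\<delta>\<bar> < 1" and chord: "(1 + \<rho> * \<delta>)\<^sup>2 \<le> \<rho>\<^sup>2"
  shows "sqrt (\<rho>\<^sup>2 - (1 + \<rho> * \<delta>)\<^sup>2) \<le> \<rho> * sqrt (1 - \<delta>\<^sup>2) - \<delta> / sqrt (1 - \<delta>\<^sup>2)"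
proof (rule real_le_lsqrt)
  define q where "q = sqrt (1 - \<delta>\<^sup>2)"
  have "\<delta>\<^sup>2 < 1" using \<open>\<bar>\<delta>\<bar> < 1\<close> by (simp add: abs_square_less_1)
  then have "q > 0" and q2: "q\<^sup>2 = 1 - \<delta>\<^sup>2" by (simp_all add: q_def)
  have "\<rho> * q\<^sup>2 \<ge> \<delta>"
  proof (cases "\<delta> \<le> 0")
    case False
    have "\<rho> * (\<rho> * q\<^sup>2) \<ge> 1 + 2 * (\<rho> * \<delta>)"
      using chord unfolding q2 by (simp add: power2_eq_square algebra_simps)
    moreover have "\<rho> * \<delta> > 0" using False \<open>\<rho> > 0\<close> by simp
    ultimately have "\<rho> * (\<rho> * q\<^sup>2) \<ge> \<rho> * \<delta>" by linarith
    then show ?thesis using \<open>\<rho> > 0\<close> by simp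
  qed (use \<open>\<rho> > 0\<close> in \<open>smt (verit) mult_nonneg_nonneg zero_le_power2\<close>)
  then show "0 \<le> \<rho> * q - \<delta> / q"
    using \<open>q > 0\<close> by (simp add: field_simps power2_eq_square)
  have "(\<rho> * q - \<delta> / q)\<^sup>2 = \<rho>\<^sup>2 * q\<^sup>2 - 2 * (\<rho> * \<delta>) + (\<delta> / q)\<^sup>2"
    using \<open>q > 0\<close> by (simp add: power2_diff power_mult_distrib)
  also have "\<dots> = \<rho>\<^sup>2 - (1 + \<rho> * \<delta>)\<^sup>2 + 1 + (\<delta> / q)\<^sup>2"
    unfolding q2 by (simp add: power2_sum power_mult_distrib algebra_simps)
  finally show "\<rho>\<^sup>2 - (1 + \<rho> * \<delta>)\<^sup>2 \<le> (\<rho> * q - \<delta> / q)\<^sup>2"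
    by (simp add: add_nonneg_nonneg)
qed

definition rejection :: "'a::real_inner \<Rightarrow> 'a \<Rightarrow> 'a" where
  "rejection u a = u - (u \<bullet> a) *\<^sub>R a"

lemma inner_rejection: "norm a = 1 \<Longrightarrow> a \<bullet> rejection u a = 0"
  by (simp add: rejection_def inner_diff_right inner_commute dot_square_norm)

lemma inner_eq_parallel_plus_rejection:
  "norm a = 1 \<Longrightarrow> u \<bullet> x = (u \<bullet> a) * (a \<bullet> x) + rejection u a \<bullet> rejection x a"
  by (simp add: rejection_def inner_diff_left inner_diff_right inner_commute dot_square_norm)

lemma norm_rejection:
  assumes "norm a = 1"
  shows "norm (rejection u a) = sqrt ((norm u)\<^sup>2 - (u \<bullet> a)\<^sup>2)"
proof -
  have "(norm (rejection u a))\<^sup>2 = (norm u)\<^sup>2 - (u \<bullet> a)\<^sup>2"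
    using inner_eq_parallel_plus_rejection[OF assms, of u u]
    by (simp add: dot_square_norm power2_eq_square inner_commute)
  then show ?thesis by (metis norm_ge_zero real_sqrt_unique)
qed

lemma inner_le_parallel_plus_rejection:
  assumes "norm a = 1"
  shows "u \<bullet> x \<le> (u \<bullet> a) * (a \<bullet> x)
                   + sqrt ((norm u)\<^sup>2 - (u \<bullet> a)\<^sup>2) * sqrt ((norm x)\<^sup>2 - (a \<bullet> x)\<^sup>2)"
  using inner_eq_parallel_plus_rejection[OF assms, of u x]
    norm_cauchy_schwarz[of "rejection u a" "rejection x a"]
  by (simp add: norm_rejection[OF assms] inner_commute[of x a])

lemma abs_inner_less_1_if_not_parallel:
  fixes u v :: "'a::real_inner"
  assumes "norm u = 1" and "norm v = 1" and "u \<noteq> v" and "u \<noteq> - v"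
  shows "\<bar>u \<bullet> v\<bar> < 1"
proof -
  have "\<bar>u \<bullet> v\<bar> \<noteq> norm u * norm v"
    unfolding norm_cauchy_schwarz_abs_eq using assms by (auto simp: minus_equation_iff)
  with Cauchy_Schwarz_ineq2[of u v] assms show ?thesis by simp
qed

text \<open>When the constraint a \<bullet> x + d \<bullet> z \<le> 0 is active, the maximum defining phi is
  attained at phi_maximizer, the point of norm |z| in the plane of a and lam whose
  a-component is - d \<bullet> z, and equals phi_active.\<close>
definition phi_active :: "real^'n \<Rightarrow> real^'n \<Rightarrow> real^'m \<Rightarrow> real^'m \<Rightarrow> real" where
  "phi_active lam a d z =
     - (lam \<bullet> a) * (d \<bullet> z) + sqrt (1 - (lam \<bullet> a)\<^sup>2) * sqrt ((norm z)\<^sup>2 - (d \<bullet> z)\<^sup>2)"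

definition phi_maximizer :: "real^'n \<Rightarrow> real^'n \<Rightarrow> real^'m \<Rightarrow> real^'m \<Rightarrow> real^'n" where
  "phi_maximizer lam a d z = (- (d \<bullet> z)) *\<^sub>R a
     + (sqrt ((norm z)\<^sup>2 - (d \<bullet> z)\<^sup>2) / sqrt (1 - (lam \<bullet> a)\<^sup>2)) *\<^sub>R rejection lam a"

context
  fixes lam a :: "real^'n" and d :: "real^'m"
  assumes norm_a: "norm a = 1" and norm_lam: "norm lam = 1"
    and abs_lam_a: "\<bar>lam \<bullet> a\<bar> < 1" and norm_d: "norm d < 1"
begin

lemma sqrt_one_minus_lam_a:
  shows "sqrt (1 - (lam \<bullet> a)\<^sup>2) > 0" and "(sqrt (1 - (lam \<bullet> a)\<^sup>2))\<^sup>2 = 1 - (lam \<bullet> a)\<^sup>2"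
  using abs_lam_a by (simp_all add: abs_square_less_1 less_imp_le)

lemma inner_lam_rejection: "lam \<bullet> rejection lam a = (sqrt (1 - (lam \<bullet> a)\<^sup>2))\<^sup>2"
  using norm_lam sqrt_one_minus_lam_a(2)
  by (simp add: rejection_def inner_diff_right dot_square_norm power2_eq_square)

lemma norm_lam_rejection: "norm (rejection lam a) = sqrt (1 - (lam \<bullet> a)\<^sup>2)"
  using norm_rejection[OF norm_a, of lam] norm_lam by simp

lemma abs_inner_d_le: "\<bar>d \<bullet> z\<bar> \<le> norm z"
  using Cauchy_Schwarz_ineq2[of d z] norm_d mult_left_le_one_le[of "norm z" "norm d"] by simp

lemma abs_inner_d_less:
  assumes "z \<noteq> 0"
  shows "\<bar>d \<bullet> z\<bar> < norm z"
proof -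
  have "norm d * norm z < 1 * norm z"
    using assms by (intro mult_strict_right_mono[OF norm_d]) simp
  with Cauchy_Schwarz_ineq2[of d z] show ?thesis by linarith
qed

lemma inner_a_phi_maximizer: "a \<bullet> phi_maximizer lam a d z = - (d \<bullet> z)"
  using norm_a inner_rejection[OF norm_a]
  by (simp add: phi_maximizer_def inner_add_right inner_diff_right dot_square_norm)

lemma inner_lam_phi_maximizer: "lam \<bullet> phi_maximizer lam a d z = phi_active lam a d z"
proof -
  let ?s = "sqrt (1 - (lam \<bullet> a)\<^sup>2)" and ?w = "sqrt ((norm z)\<^sup>2 - (d \<bullet> z)\<^sup>2)"
  have cancel: "w / s * s\<^sup>2 = s * w" if "s > 0" for s w :: real
    using that by (simp add: power2_eq_square)
  have "lam \<bullet> phi_maximizer lam a d z = - (d \<bullet> z) * (lam \<bullet> a) + ?w / ?s * ?s\<^sup>2"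
    by (simp only: phi_maximizer_def inner_add_right inner_scaleR_right inner_lam_rejection)
  also have "\<dots> = - (lam \<bullet> a) * (d \<bullet> z) + ?s * ?w"
    by (simp only: cancel[OF sqrt_one_minus_lam_a(1)] mult.commute[of "d \<bullet> z"] mult_minus_left)
  finally show ?thesis by (simp only: phi_active_def)
qed

lemma norm_phi_maximizer: "norm (phi_maximizer lam a d z) = norm z"
proof -
  let ?s = "sqrt (1 - (lam \<bullet> a)\<^sup>2)" and ?w = "sqrt ((norm z)\<^sup>2 - (d \<bullet> z)\<^sup>2)"
  have w2: "?w\<^sup>2 = (norm z)\<^sup>2 - (d \<bullet> z)\<^sup>2"
    using abs_inner_d_le[of z] by (simp add: abs_le_square_iff[symmetric])
  have "(norm (phi_maximizer lam a d z))\<^sup>2 = (d \<bullet> z)\<^sup>2 + (?w / ?s * ?s)\<^sup>2"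
    unfolding phi_maximizer_def using norm_a sqrt_one_minus_lam_a(1)
    by (subst norm_add_Pythagorean)
      (simp_all add: orthogonal_def inner_rejection[OF norm_a] norm_lam_rejection
        power_mult_distrib)
  also have "\<dots> = (norm z)\<^sup>2"
    using sqrt_one_minus_lam_a(1) w2 by simp
  finally show ?thesis by (simp add: power2_eq_iff_nonneg)
qed

lemma phi_set_nonempty: "{lam \<bullet> x | x. norm x \<le> norm z \<and> a \<bullet> x + d \<bullet> z \<le> 0} \<noteq> {}"
proof -
  have "lam \<bullet> phi_maximizer lam a d z \<in> {lam \<bullet> x | x. norm x \<le> norm z \<and> a \<bullet> x + d \<bullet> z \<le> 0}"
    using norm_phi_maximizer[of z] inner_a_phi_maximizer[of z] by auto
  then show ?thesis by blast
qed

lemma phi_set_le_norm: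
  assumes "v \<in> {lam \<bullet> x | x. norm x \<le> norm z \<and> a \<bullet> x + d \<bullet> z \<le> 0}"
  shows "v \<le> norm z"
proof -
  obtain x where "v = lam \<bullet> x" and "norm x \<le> norm z" using assms by blast
  then show ?thesis using norm_cauchy_schwarz[of lam x] norm_lam by simp
qed

lemma inner_le_phi:
  assumes "norm x \<le> norm z" and "a \<bullet> x + d \<bullet> z \<le> 0"
  shows "lam \<bullet> x \<le> phi lam a d z"
  unfolding phi_def using assms phi_set_le_norm by (intro cSup_upper bdd_aboveI) blast+

lemma phi_le_norm: "phi lam a d z \<le> norm z"
  unfolding phi_def using phi_set_le_norm by (intro cSup_least[OF phi_set_nonempty])

lemma phi_eq_norm:
  assumes "(lam \<bullet> a) * norm z + d \<bullet> z \<le> 0"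
  shows "phi lam a d z = norm z"
proof (rule antisym[OF phi_le_norm])
  have "lam \<bullet> (norm z *\<^sub>R lam) \<le> phi lam a d z"
    using assms norm_lam by (intro inner_le_phi) (simp_all add: inner_commute mult.commute)
  then show "norm z \<le> phi lam a d z"
    using norm_lam by (simp add: dot_square_norm)
qed

lemma phi_active_le_phi: "phi_active lam a d z \<le> phi lam a d z"
  using inner_le_phi[of "phi_maximizer lam a d z" z]
  by (simp add: norm_phi_maximizer inner_a_phi_maximizer inner_lam_phi_maximizer)

text \<open>Karush-Kuhn-Tucker: lam is a nonnegative combination of the normals a and
  phi_maximizer of the two constraints active at phi_maximizer.\<close>
lemma inner_le_phi_active:
  assumes active: "(lam \<bullet> a) * norm z + d \<bullet> z \<ge> 0"
    and "norm x \<le> norm z" and "a \<bullet> x + d \<bullet> z \<le> 0"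
  shows "lam \<bullet> x \<le> phi_active lam a d z"
proof (cases "z = 0")
  case True
  then show ?thesis using \<open>norm x \<le> norm z\<close> by (simp add: phi_active_def)
next
  case False
  define c s t w x\<^sub>0 where "c = lam \<bullet> a" and "s = sqrt (1 - c\<^sup>2)" and "t = d \<bullet> z"
    and "w = sqrt ((norm z)\<^sup>2 - t\<^sup>2)" and "x\<^sub>0 = phi_maximizer lam a d z"
  have "s > 0" and "c\<^sup>2 + s\<^sup>2 = 1"
    using sqrt_one_minus_lam_a unfolding s_def c_def by simp_all
  have "\<bar>t\<bar> < norm z" using abs_inner_d_less[OF False] unfolding t_def .
  then have "t\<^sup>2 < (norm z)\<^sup>2" using abs_le_square_iff[of "norm z" t] by simp
  then have "w > 0" unfolding w_def by simp
  have "s * (- t) \<le> c * sqrt ((norm z)\<^sup>2 - (- t)\<^sup>2)"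
    using \<open>\<bar>t\<bar> < norm z\<close> active
    by (intro cross_le_on_upper_semicircle[OF \<open>c\<^sup>2 + s\<^sup>2 = 1\<close> \<open>s > 0\<close>])
      (simp_all add: c_def t_def)
  then have \<mu>: "c * w + s * t \<ge> 0" by (simp add: w_def)
  have lam_eq: "w *\<^sub>R lam = (c * w + s * t) *\<^sub>R a + s *\<^sub>R x\<^sub>0"
    using \<open>s > 0\<close> unfolding x\<^sub>0_def phi_maximizer_def rejection_def c_def[symmetric]
      s_def[symmetric] t_def[symmetric] w_def[symmetric]
    by (simp add: algebra_simps)
  have "a \<bullet> x \<le> a \<bullet> x\<^sub>0"
    using \<open>a \<bullet> x + d \<bullet> z \<le> 0\<close> by (simp add: x\<^sub>0_def inner_a_phi_maximizer)
  have "x\<^sub>0 \<bullet> x \<le> norm z * norm z"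
    using norm_cauchy_schwarz[of x\<^sub>0 x] mult_left_mono[OF \<open>norm x \<le> norm z\<close>, of "norm z"]
    by (simp add: x\<^sub>0_def norm_phi_maximizer)
  then have "x\<^sub>0 \<bullet> x \<le> x\<^sub>0 \<bullet> x\<^sub>0"
    by (simp add: x\<^sub>0_def norm_phi_maximizer dot_square_norm power2_eq_square)
  have "w * (lam \<bullet> x) = (c * w + s * t) * (a \<bullet> x) + s * (x\<^sub>0 \<bullet> x)"
    by (simp flip: inner_scaleR_left add: lam_eq inner_add_left)
  also have "\<dots> \<le> (c * w + s * t) * (a \<bullet> x\<^sub>0) + s * (x\<^sub>0 \<bullet> x\<^sub>0)"
    using \<mu> \<open>s > 0\<close> \<open>a \<bullet> x \<le> a \<bullet> x\<^sub>0\<close> \<open>x\<^sub>0 \<bullet> x \<le> x\<^sub>0 \<bullet> x\<^sub>0\<close>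
    by (intro add_mono mult_left_mono) simp_all
  also have "\<dots> = w * (lam \<bullet> x\<^sub>0)"
    by (simp flip: inner_scaleR_left add: lam_eq inner_add_left)
  finally have "w * (lam \<bullet> x) \<le> w * (lam \<bullet> x\<^sub>0)" .
  then show ?thesis
    using \<open>w > 0\<close> by (simp add: x\<^sub>0_def inner_lam_phi_maximizer)
qed

lemma phi_le_phi_active:
  assumes "(lam \<bullet> a) * norm z + d \<bullet> z \<ge> 0"
  shows "phi lam a d z \<le> phi_active lam a d z"
  unfolding phi_def
  by (rule cSup_least[OF phi_set_nonempty]) (auto intro: inner_le_phi_active[OF assms])

lemma phi_eq_phi_active:
  assumes "(lam \<bullet> a) * norm z + d \<bullet> z \<ge> 0"
  shows "phi lam a d z = phi_active lam a d z"
  using phi_le_phi_active[OF assms] phi_active_le_phi[of z] by (rule antisym)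

lemma phi_active_scaleR: "t > 0 \<Longrightarrow> phi_active lam a d (t *\<^sub>R z) = t * phi_active lam a d z"
proof -
  assume "t > 0"
  have "(norm (t *\<^sub>R z))\<^sup>2 - (d \<bullet> (t *\<^sub>R z))\<^sup>2 = t\<^sup>2 * ((norm z)\<^sup>2 - (d \<bullet> z)\<^sup>2)"
    using \<open>t > 0\<close> by (simp add: power_mult_distrib algebra_simps)
  then have "sqrt ((norm (t *\<^sub>R z))\<^sup>2 - (d \<bullet> (t *\<^sub>R z))\<^sup>2) = t * sqrt ((norm z)\<^sup>2 - (d \<bullet> z)\<^sup>2)"
    using \<open>t > 0\<close> by (simp add: real_sqrt_mult)
  then show ?thesis
    unfolding phi_active_def by (simp add: algebra_simps)
qed

lemma phi_scaleR: "t > 0 \<Longrightarrow> phi lam a d (t *\<^sub>R z) = t * phi lam a d z"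
proof -
  assume "t > 0"
  have switch: "(lam \<bullet> a) * norm (t *\<^sub>R z) + d \<bullet> (t *\<^sub>R z) = t * ((lam \<bullet> a) * norm z + d \<bullet> z)"
    using \<open>t > 0\<close> by (simp add: algebra_simps)
  show ?thesis
  proof (cases "(lam \<bullet> a) * norm z + d \<bullet> z \<le> 0")
    case True
    then show ?thesis
      using \<open>t > 0\<close> switch by (simp add: phi_eq_norm mult_nonneg_nonpos)
  next
    case False
    then show ?thesis
      using \<open>t > 0\<close> switch by (simp add: phi_eq_phi_active phi_active_scaleR)
  qed
qed

lemma phi_active_differentiable:
  assumes "z \<noteq> 0"
  shows "phi_active lam a d differentiable (at z)"
proof -
  have "0 < z \<bullet> z - (d \<bullet> z)\<^sup>2"
    using abs_inner_d_less[OF assms] abs_le_square_iff[of "norm z" "d \<bullet> z"]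
    by (simp add: dot_square_norm)
  moreover have "phi_active lam a d = (\<lambda>z. - (lam \<bullet> a) * (d \<bullet> z)
      + sqrt (1 - (lam \<bullet> a)\<^sup>2) * sqrt (z \<bullet> z - (d \<bullet> z)\<^sup>2))"
    by (intro ext) (simp add: phi_active_def dot_square_norm)
  ultimately show ?thesis
    unfolding differentiable_def by (auto intro!: derivative_eq_intros exI)
qed

text \<open>On the switching cone phi_active and norm agree to first order, because
  phi_active \<le> norm with equality there; phi is squeezed between them.\<close>
lemma phi_has_derivative_on_switching_cone:
  assumes "b \<noteq> 0" and switch: "(lam \<bullet> a) * norm b + d \<bullet> b = 0"
  shows "(phi lam a d has_derivative (\<lambda>h. h \<bullet> sgn b)) (at b)"
proof -
  obtain D where D: "(phi_active lam a d has_derivative D) (at b)"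
    using phi_active_differentiable[OF assms(1)] unfolding differentiable_def by blast
  have norm_deriv: "(norm has_derivative (\<lambda>h. h \<bullet> sgn b)) (at b)"
    using has_derivative_norm[OF assms(1)] .
  have at_b: "phi_active lam a d b = phi lam a d b" "norm b = phi lam a d b"
    using phi_eq_phi_active[of b] phi_eq_norm[of b] switch by simp_all
  have below: "phi_active lam a d z \<le> phi lam a d z" and above: "phi lam a d z \<le> norm z" for z
    by (rule phi_active_le_phi, rule phi_le_norm)
  have "(\<lambda>h. h \<bullet> sgn b - D h) = (\<lambda>h. 0)"
    using has_derivative_diff[OF norm_deriv D]
    by (rule has_derivative_local_min)
      (use at_b in \<open>auto intro!: always_eventually order_trans[OF below above]\<close>)
  then have "D = (\<lambda>h. h \<bullet> sgn b)" by (metis eq_iff_diff_eq_0)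
  with D show ?thesis
    using has_derivative_sandwich[where f = "phi lam a d" and x = b
        and L = "phi_active lam a d" and U = norm] at_b norm_deriv below above
    by (auto intro: always_eventually)
qed

lemma phi_differentiable:
  assumes "b \<noteq> 0"
  shows "phi lam a d differentiable (at b)"
proof -
  let ?sw = "\<lambda>z. (lam \<bullet> a) * norm z + d \<bullet> z"
  have "continuous_on UNIV ?sw" by (intro continuous_intros)
  then have "open {z. ?sw z > 0}" and "open {z. ?sw z < 0}"
    by (auto intro: open_Collect_less continuous_on_const)
  consider "?sw b > 0" | "?sw b < 0" | "?sw b = 0" by linarith
  then show ?thesis
  proof cases
    case 1
    obtain D where "(phi_active lam a d has_derivative D) (at b)"
      using phi_active_differentiable[OF assms] unfolding differentiable_def by blast
    then have "(phi lam a d has_derivative D) (at b)"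
      by (rule has_derivative_transform_within_open[OF _ \<open>open {z. ?sw z > 0}\<close>])
        (simp_all add: 1 phi_eq_phi_active)
    then show ?thesis unfolding differentiable_def by blast
  next
    case 2
    have "(phi lam a d has_derivative (\<lambda>h. h \<bullet> sgn b)) (at b)"
      by (rule has_derivative_transform_within_open[OF has_derivative_norm[OF assms]
            \<open>open {z. ?sw z < 0}\<close>])
        (simp_all add: 2 phi_eq_norm)
    then show ?thesis unfolding differentiable_def by blast
  next
    case 3
    then show ?thesis
      using phi_has_derivative_on_switching_cone[OF assms] unfolding differentiable_def by blast
  qed
qed

lemma grad_phi_inner_self:
  assumes "b \<noteq> 0"
  shows "grad_phi lam a d b \<bullet> b = phi lam a d b"
proof -
  obtain D where "(phi lam a d has_derivative D) (at b)"
    using phi_differentiable[OF assms] unfolding differentiable_def by blast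
  then have grad: "GDERIV (phi lam a d) b :> adjoint D 1"
    by (rule has_derivative_imp_gderiv)
  then have "grad_phi lam a d b = adjoint D 1"
    unfolding grad_phi_def by (blast intro: the_equality gderiv_unique)
  with gderiv_inner_self_if_homogeneous[OF grad phi_scaleR] show ?thesis by simp
qed

lemma inner_grad_phi_sgn:
  assumes "y \<noteq> 0"
  shows "grad_phi lam a d (sgn y) \<bullet> y = norm y * phi lam a d (sgn y)"
proof -
  have "grad_phi lam a d (sgn y) \<bullet> (norm y *\<^sub>R sgn y) = norm y * phi lam a d (sgn y)"
    using grad_phi_inner_self[of "sgn y"] assms by (simp add: sgn_zero_iff)
  moreover have "norm y *\<^sub>R sgn y = y" using assms by (simp add: sgn_div_norm)
  ultimately show ?thesis by simp
qed

lemma phi_r_fun_unit_active: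
  assumes "norm \<beta> = 1" and "lam \<bullet> a + d \<bullet> \<beta> > 0"
  defines "q \<equiv> sqrt (1 - (d \<bullet> \<beta>)\<^sup>2)"
  shows "phi lam a d \<beta> = - (lam \<bullet> a) * (d \<bullet> \<beta>) + sqrt (1 - (lam \<bullet> a)\<^sup>2) * q"
    and "r_fun lam a d \<beta> = lam \<bullet> a + sqrt (1 - (lam \<bullet> a)\<^sup>2) * (d \<bullet> \<beta> / q)"
proof -
  define c s \<delta> where "c = lam \<bullet> a" and "s = sqrt (1 - c\<^sup>2)" and "\<delta> = d \<bullet> \<beta>"
  have "\<beta> \<noteq> 0" using assms(1) by auto
  then have "\<bar>\<delta>\<bar> < 1"
    using abs_inner_d_less[of \<beta>] assms(1) by (simp add: \<delta>_def)
  then have "q > 0" by (simp add: q_def \<delta>_def abs_square_less_1)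
  have "s > 0" and s2: "s\<^sup>2 = 1 - c\<^sup>2"
    using sqrt_one_minus_lam_a by (simp_all add: s_def c_def)
  show phi_\<beta>: "phi lam a d \<beta> = - (lam \<bullet> a) * (d \<bullet> \<beta>) + sqrt (1 - (lam \<bullet> a)\<^sup>2) * q"
    using assms by (simp add: phi_eq_phi_active phi_active_def)
  have "\<delta> + c * (- c * \<delta> + s * q) = \<delta> * (1 - c\<^sup>2) + s * (c * q)"
    by (simp add: algebra_simps power2_eq_square)
  also have "\<dots> = s * (s * \<delta> + c * q)"
    unfolding s2[symmetric] by (simp add: algebra_simps power2_eq_square)
  finally have numerator: "\<delta> + c * (- c * \<delta> + s * q) = s * (s * \<delta> + c * q)" .
  have "r_fun lam a d \<beta> = (\<delta> + c * phi lam a d \<beta>) / (phi lam a d \<beta> + \<delta> * c)"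
    using assms(2) unfolding r_fun_def c_def[symmetric] \<delta>_def[symmetric] by simp
  also have "\<dots> = s * (s * \<delta> + c * q) / (s * q)"
    unfolding phi_\<beta> c_def[symmetric] s_def[symmetric] \<delta>_def[symmetric] numerator
    by (simp add: algebra_simps)
  also have "\<dots> = c + s * (\<delta> / q)"
    using \<open>s > 0\<close> \<open>q > 0\<close> by (simp add: field_simps)
  finally show "r_fun lam a d \<beta> = lam \<bullet> a + sqrt (1 - (lam \<bullet> a)\<^sup>2) * (d \<bullet> \<beta> / q)"
    by (simp only: c_def s_def \<delta>_def)
qed

lemma inner_lam_le_on_slice:
  assumes "norm x \<le> \<rho>" and "\<rho> > 0" and "\<bar>\<delta>\<bar> < 1" and slice: "a \<bullet> x = - (1 + \<rho> * \<delta>)"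
  defines "q \<equiv> sqrt (1 - \<delta>\<^sup>2)"
  shows "lam \<bullet> x \<le> - (lam \<bullet> a) * (1 + \<rho> * \<delta>) + sqrt (1 - (lam \<bullet> a)\<^sup>2) * (\<rho> * q - \<delta> / q)"
proof -
  define c s where "c = lam \<bullet> a" and "s = sqrt (1 - c\<^sup>2)"
  have "s > 0" using sqrt_one_minus_lam_a by (simp add: s_def c_def)
  have "\<bar>a \<bullet> x\<bar> \<le> norm x"
    using Cauchy_Schwarz_ineq2[of a x] norm_a by simp
  then have "(a \<bullet> x)\<^sup>2 \<le> (norm x)\<^sup>2" and "(norm x)\<^sup>2 \<le> \<rho>\<^sup>2"
    using \<open>norm x \<le> \<rho>\<close> by (simp_all add: abs_le_square_iff[symmetric])
  have "sqrt (\<rho>\<^sup>2 - (a \<bullet> x)\<^sup>2) \<le> \<rho> * q - \<delta> / q"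
    using half_chord_le[OF \<open>\<rho> > 0\<close> \<open>\<bar>\<delta>\<bar> < 1\<close>] \<open>(a \<bullet> x)\<^sup>2 \<le> (norm x)\<^sup>2\<close>
      \<open>(norm x)\<^sup>2 \<le> \<rho>\<^sup>2\<close>
    unfolding q_def slice by (simp only: power2_minus)
  have "lam \<bullet> x \<le> c * (a \<bullet> x) + s * sqrt ((norm x)\<^sup>2 - (a \<bullet> x)\<^sup>2)"
    using inner_le_parallel_plus_rejection[OF norm_a, of lam x] norm_lam
    by (simp add: c_def s_def)
  also have "\<dots> \<le> c * (a \<bullet> x) + s * sqrt (\<rho>\<^sup>2 - (a \<bullet> x)\<^sup>2)"
    using \<open>s > 0\<close> \<open>(norm x)\<^sup>2 \<le> \<rho>\<^sup>2\<close> by simp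
  also have "\<dots> \<le> c * (a \<bullet> x) + s * (\<rho> * q - \<delta> / q)"
    using \<open>s > 0\<close> \<open>sqrt (\<rho>\<^sup>2 - (a \<bullet> x)\<^sup>2) \<le> \<rho> * q - \<delta> / q\<close> by simp
  finally show ?thesis by (simp add: slice c_def s_def algebra_simps)
qed

lemma r_fun_le_on_S:
  assumes "norm x \<le> norm y" and on_S: "a \<bullet> x + d \<bullet> y = -1"
  shows "r_fun lam a d (sgn y) \<le> - (lam \<bullet> x) + norm y * phi lam a d (sgn y)"
proof -
  define \<beta> \<rho> c s \<delta> where "\<beta> = sgn y" and "\<rho> = norm y" and "c = lam \<bullet> a"
    and "s = sqrt (1 - c\<^sup>2)" and "\<delta> = d \<bullet> \<beta>"
  have "y \<noteq> 0" using assms by auto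
  then have "norm \<beta> = 1" and "\<rho> > 0" and "d \<bullet> y = \<rho> * \<delta>"
    by (simp_all add: \<beta>_def \<rho>_def \<delta>_def norm_sgn sgn_div_norm)
  show ?thesis
  proof (cases "c + \<delta> \<le> 0")
    case True
    then have "r_fun lam a d \<beta> = 0" and "phi lam a d \<beta> = 1"
      using \<open>norm \<beta> = 1\<close> by (simp_all add: r_fun_def phi_eq_norm c_def \<delta>_def)
    moreover have "lam \<bullet> x \<le> \<rho>"
      using norm_cauchy_schwarz[of lam x] norm_lam \<open>norm x \<le> norm y\<close> by (simp add: \<rho>_def)
    ultimately show ?thesis by (simp add: \<beta>_def \<rho>_def)
  next
    case False
    define q where "q = sqrt (1 - \<delta>\<^sup>2)"
    have "\<beta> \<noteq> 0" using \<open>norm \<beta> = 1\<close> by auto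
    then have "\<bar>\<delta>\<bar> < 1"
      using abs_inner_d_less[of \<beta>] \<open>norm \<beta> = 1\<close> by (simp add: \<delta>_def)
    have phi_\<beta>: "phi lam a d \<beta> = - c * \<delta> + s * q"
      and r_\<beta>: "r_fun lam a d \<beta> = c + s * (\<delta> / q)"
      using phi_r_fun_unit_active[OF \<open>norm \<beta> = 1\<close>] False
      by (simp_all add: c_def s_def \<delta>_def q_def)
    have "lam \<bullet> x \<le> - c * (1 + \<rho> * \<delta>) + s * (\<rho> * q - \<delta> / q)"
      using inner_lam_le_on_slice[OF _ \<open>\<rho> > 0\<close> \<open>\<bar>\<delta>\<bar> < 1\<close>] assms \<open>d \<bullet> y = \<rho> * \<delta>\<close>
      by (simp add: \<rho>_def c_def s_def q_def eq_neg_iff_add_eq_0 add.commute)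
    then show ?thesis
      unfolding \<beta>_def[symmetric] \<rho>_def[symmetric] r_\<beta> phi_\<beta> by (simp add: algebra_simps)
  qed
qed

end

lemma interior_C_set_strict:
  assumes "(x, y) \<in> interior (C_set lam a d)" and "lam \<noteq> 0" and "norm \<beta> = 1"
  shows "- (lam \<bullet> x) + grad_phi lam a d \<beta> \<bullet> y < r_fun lam a d \<beta>"
proof -
  obtain e where "e > 0" and ball: "ball (x, y) e \<subseteq> C_set lam a d"
    using assms(1) mem_interior by blast
  define t where "t = e / (2 * norm lam)"
  have "t > 0" using \<open>e > 0\<close> \<open>lam \<noteq> 0\<close> by (simp add: t_def)
  have "dist (x, y) (x - t *\<^sub>R lam, y) < e"
    using \<open>e > 0\<close> \<open>lam \<noteq> 0\<close> by (simp add: dist_Pair_Pair dist_norm t_def)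
  with ball have "- (lam \<bullet> (x - t *\<^sub>R lam)) + grad_phi lam a d \<beta> \<bullet> y \<le> r_fun lam a d \<beta>"
    using assms(3) unfolding C_set_def by auto
  moreover have "lam \<bullet> (x - t *\<^sub>R lam) = lam \<bullet> x - t * (lam \<bullet> lam)"
    by (simp add: inner_diff_right)
  moreover have "t * (lam \<bullet> lam) > 0" using \<open>t > 0\<close> \<open>lam \<noteq> 0\<close> by simp
  ultimately show ?thesis by linarith
qed

theorem theorem9:
  fixes a lam :: "real^'n" and d :: "real^'m"
  assumes "norm a = 1" and "norm d < 1" and "norm lam = 1"
    and "lam \<noteq> a" and "lam \<noteq> - a"
  shows "interior (C_set lam a d) \<inter> S_set a d = {}"
proof -
  have lam_a: "\<bar>lam \<bullet> a\<bar> < 1"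
    using abs_inner_less_1_if_not_parallel assms(1,3-5) by blast
  have "lam \<noteq> 0" using assms(3) by auto
  have "(x, y) \<notin> interior (C_set lam a d)" if "(x, y) \<in> S_set a d" for x y
  proof
    assume interior: "(x, y) \<in> interior (C_set lam a d)"
    from that have S: "norm x \<le> norm y" "a \<bullet> x + d \<bullet> y = -1"
      by (auto simp: S_set_def)
    then have "y \<noteq> 0" by auto
    have "- (lam \<bullet> x) + grad_phi lam a d (sgn y) \<bullet> y < r_fun lam a d (sgn y)"
      using interior_C_set_strict[OF interior \<open>lam \<noteq> 0\<close>] \<open>y \<noteq> 0\<close> by (simp add: norm_sgn)
    moreover have "grad_phi lam a d (sgn y) \<bullet> y = norm y * phi lam a d (sgn y)"
      by (rule inner_grad_phi_sgn[OF assms(1,3) lam_a assms(2) \<open>y \<noteq> 0\<close>])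
    moreover have "r_fun lam a d (sgn y) \<le> - (lam \<bullet> x) + norm y * phi lam a d (sgn y)"
      by (rule r_fun_le_on_S[OF assms(1,3) lam_a assms(2) S])
    ultimately show False by linarith
  qed
  then show ?thesis by auto
qed

end
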